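(* Let $\Sigma$ be a $(\lambda,\beta)$-set system on a finite set $V$. For every $S\in\Sigma$ with $|S|\ge 1/(\lambda-\lambda^2)$ and every $t\in S$, there exists a $t$-bound set $S'\in\Sigma$ with $\lambda^2|S|\le|S'|\le\lambda|S|$.
   Context: A set containing vertex $t$ is called $t$-bound. For $0<\lambda<1$, $\beta>1$, a collection $\Sigma$ of subsets of a finite set $V$ is a $(\lambda,\beta)$-set system if: (K1) $V\in\Sigma$; (K2) if $S\in\Sigma$ has $|S|>1$, then for every $t\in S$ there is a $t$-bound $S'\in\Sigma$ with $S'\subset S$ and $|S'|\ge\min\{\lambda|S|,|S|-1\}$; (K3) for every $v\in V$ and $L\ge2$, the union of all sets in $\Sigma$ containing $v$ of size at most $L$ has at most $\beta L$ elements. *)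

theory Defs
  imports Complex_Main
begin

definition bound :: "'a \<Rightarrow> 'a set \<Rightarrow> bool" where
  "bound t S \<longleftrightarrow> t \<in> S"

definition lb_set_system :: "real \<Rightarrow> real \<Rightarrow> 'a set \<Rightarrow> 'a set set \<Rightarrow> bool" where
  "lb_set_system lam bet V \<Sigma> \<longleftrightarrow>
     0 < lam \<and> lam < 1 \<and> bet > 1 \<and> finite V \<and> \<Sigma> \<subseteq> Pow V \<and>
     V \<in> \<Sigma> \<and>
     (\<forall>S\<in>\<Sigma>. card S > 1 \<longrightarrow>
        (\<forall>t\<in>S. \<exists>S'\<in>\<Sigma>. bound t S' \<and> S' \<subset> S \<and>
             real (card S') \<ge> min (lam * real (card S)) (real (card S) - 1))) \<and>
     (\<forall>v\<in>V. \<forall>L::real. L \<ge> 2 \<longrightarrow>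
        real (card (\<Union>{S\<in>\<Sigma>. v \<in> S \<and> real (card S) \<le> L})) \<le> bet * L)"

end

theory Submission
  imports Defs
begin

text \<open>Shrink along (K2) until the size first drops to at most x: the last step starts above
  x, so it keeps at least min(lam x, x - 1) elements. With x = lam |S| and
  |S| \<ge> 1/(lam - lam^2) this lower bound is lam^2 |S|.\<close>

lemma bound_subset_descent:
  fixes lam x :: real and \<Sigma> :: "'a set set"
  assumes shrink: "\<And>T t. T \<in> \<Sigma> \<Longrightarrow> card T > 1 \<Longrightarrow> t \<in> T \<Longrightarrow>
      \<exists>T'\<in>\<Sigma>. t \<in> T' \<and> T' \<subset> T \<and> min (lam * card T) (real (card T) - 1) \<le> card T'"
    and finite: "\<And>T. T \<in> \<Sigma> \<Longrightarrow> finite T"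
    and "0 < lam" and "1 \<le> x"
    and "T \<in> \<Sigma>" and "t \<in> T" and "x < card T"
  shows "\<exists>S'\<in>\<Sigma>. t \<in> S' \<and> min (lam * x) (x - 1) \<le> card S' \<and> card S' \<le> x"
  using assms(5-7)
proof (induction "card T" arbitrary: T rule: less_induct)
  case less
  have "card T > 1" using less.prems \<open>1 \<le> x\<close> by linarith
  then obtain T' where T': "T' \<in> \<Sigma>" "t \<in> T'" "T' \<subset> T"
      and large: "min (lam * card T) (real (card T) - 1) \<le> card T'"
    using shrink less.prems by blast
  show ?case
  proof (cases "card T' \<le> x")
    case True
    have "min (lam * x) (x - 1) \<le> min (lam * card T) (real (card T) - 1)"
      using \<open>x < card T\<close> \<open>0 < lam\<close> by (intro min.mono) auto
    then show ?thesis using T' True large by auto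
  next
    case False
    have "card T' < card T" using finite[OF less.prems(1)] T'(3) by (rule psubset_card_mono)
    then show ?thesis using less.hyps T' False by simp
  qed
qed

theorem proposition5:
  fixes lam bet :: real and V :: "'a set" and \<Sigma> :: "'a set set"
  assumes "lb_set_system lam bet V \<Sigma>"
    and "S \<in> \<Sigma>" and "real (card S) \<ge> 1 / (lam - lam^2)" and "t \<in> S"
  shows "\<exists>S'\<in>\<Sigma>. bound t S' \<and> lam^2 * real (card S) \<le> real (card S')
                 \<and> real (card S') \<le> lam * real (card S)"
proof -
  define n where "n = real (card S)"
  have "0 < lam" "lam < 1" "finite V" "\<Sigma> \<subseteq> Pow V"
    and shrink: "\<And>T t. T \<in> \<Sigma> \<Longrightarrow> card T > 1 \<Longrightarrow> t \<in> T \<Longrightarrow>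
      \<exists>T'\<in>\<Sigma>. t \<in> T' \<and> T' \<subset> T \<and> min (lam * card T) (real (card T) - 1) \<le> card T'"
    using assms(1) unfolding lb_set_system_def bound_def by blast+
  then have finite: "\<And>T. T \<in> \<Sigma> \<Longrightarrow> finite T" by (meson PowD finite_subset subsetD)
  have "lam - lam^2 > 0" using \<open>0 < lam\<close> \<open>lam < 1\<close> by (simp add: power2_eq_square)
  then have gap: "1 \<le> n * (lam - lam^2)" using assms(3) by (simp add: n_def divide_le_eq)
  then have "n > 0" using \<open>lam - lam^2 > 0\<close> by (smt (verit) mult_nonpos_nonneg)
  then have "0 < lam^2 * n" "lam * n < card S" using \<open>0 < lam\<close> \<open>lam < 1\<close> by (simp_all add: n_def)
  then have "1 \<le> lam * n" and min_eq: "min (lam * (lam * n)) (lam * n - 1) = lam^2 * n"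
    using gap by (auto simp: power2_eq_square algebra_simps)
  with bound_subset_descent[of \<Sigma> lam "lam * n" S t] shrink finite \<open>0 < lam\<close>
    assms(2,4) \<open>lam * n < card S\<close>
  obtain S' where "S' \<in> \<Sigma>" "t \<in> S'" "lam^2 * n \<le> card S'" "card S' \<le> lam * n"
    by auto
  then show ?thesis unfolding bound_def n_def by blast
qed

end
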